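(* For coalescing random walks on a finite Markov chain, $P_t=\mathbb{E}(N_t^{-1})$ for every $t\ge0$.
   Context: $(V,\mathbf r)$ is a continuous-time irreducible Markov chain on a finite set $V$ ($|V|=n$) with symmetric rates. Coalescing random walks are realised via the graphical representation: each directed edge $(x,y)$ rings at the times of an independent Poisson process of rate $r_{x,y}$, and every particle at $x$ at such a time moves to $y$. Let $X_1,\dots,X_n$ be the paths of the particles started at the $n$ distinct states (so particles at the same location coincide thereafter). For paths, $\mathcal C(P_1,\dots,P_k)=\inf\{t:P_1(t)=\dots=P_k(t)\}$. Let $\iota$ be uniform on $\{1,\dots,n\}$ independent of everything, and $N_t:=|\{i:\mathcal C(X_i,X_\iota)\le t\}|$. $P_t:=\mathbb{E}|\xi_t|/|V|$ where $\xi_t$ is the set of occupied states at time $t$. *)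

theory Defs
  imports "HOL-Probability.Probability"
begin

text \<open>Graphical representation. A ring configuration R assigns to each directed edge
(x,y) the set R x y of its ring times.\<close>

text \<open>Ring times of a Poisson process given by its interarrival times tau 0, tau 1, ...\<close>
definition arrival_times :: "(nat \<Rightarrow> real) \<Rightarrow> real set" where
  "arrival_times tau = range (\<lambda>k. \<Sum>j\<le>k. tau j)"

definition ring_sets ::
  "('a \<Rightarrow> 'a \<Rightarrow> real) \<Rightarrow> ('a \<Rightarrow> 'a \<Rightarrow> nat \<Rightarrow> real) \<Rightarrow> 'a \<Rightarrow> 'a \<Rightarrow> real set" where
  "ring_sets r tau x y = (if x \<noteq> y \<and> 0 < r x y then arrival_times (tau x y) else {})"

text \<open>Effect of the rings at time s on a particle at z: it moves along the edge that rings
(simultaneous rings happen with probability zero; then an arbitrary choice is made).\<close>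
definition ring_step :: "('a \<Rightarrow> 'a \<Rightarrow> real set) \<Rightarrow> real \<Rightarrow> 'a \<Rightarrow> 'a" where
  "ring_step R s z = (if \<exists>y. z \<noteq> y \<and> s \<in> R z y then (SOME y. z \<noteq> y \<and> s \<in> R z y) else z)"

text \<open>Position at time t of the particle started at x: apply the rings in [0,t] in
chronological order (the set of ring times in [0,t] is finite almost surely).\<close>
definition graphical_path :: "('a \<Rightarrow> 'a \<Rightarrow> real set) \<Rightarrow> 'a \<Rightarrow> real \<Rightarrow> 'a" where
  "graphical_path R x t =
     fold (ring_step R) (sorted_list_of_set {s. 0 \<le> s \<and> s \<le> t \<and> (\<exists>a b. s \<in> R a b)}) x"

definition coal_time :: "(real \<Rightarrow> 'a) \<Rightarrow> (real \<Rightarrow> 'a) \<Rightarrow> ereal" where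
  "coal_time P Q = Inf {ereal t | t. 0 \<le> t \<and> P t = Q t}"

definition irreducible_rates :: "('a \<Rightarrow> 'a \<Rightarrow> real) \<Rightarrow> bool" where
  "irreducible_rates r \<longleftrightarrow> (\<forall>x y. (x, y) \<in> {(a, b). a \<noteq> b \<and> 0 < r a b}\<^sup>*)"

end

theory Submission
  imports Defs
begin

text \<open>Almost surely only finitely many rings occur in [0,t]; then two particles have coalesced by
  time t iff they occupy the same state at time t, so N_t is the size of the fibre of \<iota> under the
  position map \<xi> = (X_i(t))_i. Since \<iota> is uniform on the n states and independent of the rings,
  E(1/N_t) is the sum over \<phi> of P(\<xi> = \<phi>) times the average over v of the reciprocal size of
  the fibre of \<phi> through v; summing these reciprocals over all v counts every state in the range
  of \<phi> exactly once, which gives E|\<xi>(V)|/n = P_t. Measurability of \<xi>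
  and N_t comes from describing the chronological list of rings in [0,t] by countably many
  conditions on the ring times.\<close>

section \<open>Ring times and coalescence times\<close>

definition ring_times_upto :: "('a \<Rightarrow> 'a \<Rightarrow> real set) \<Rightarrow> real \<Rightarrow> real set" where
  "ring_times_upto R t = {s. 0 \<le> s \<and> s \<le> t \<and> (\<exists>a b. s \<in> R a b)}"

lemma graphical_path_fold:
  "graphical_path R x t = fold (ring_step R) (sorted_list_of_set (ring_times_upto R t)) x"
  by (simp add: graphical_path_def ring_times_upto_def)

lemma ring_times_upto_mono: "s \<le> t \<Longrightarrow> ring_times_upto R s \<subseteq> ring_times_upto R t"
  by (auto simp: ring_times_upto_def)

lemma graphical_path_infinite:
  "infinite (ring_times_upto R t) \<Longrightarrow> graphical_path R x t = x"
  by (simp add: graphical_path_fold)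

lemma graphical_path_cong:
  "ring_times_upto R s = ring_times_upto R t \<Longrightarrow> graphical_path R x s = graphical_path R x t"
  by (simp add: graphical_path_fold)

lemma sorted_list_of_ring_times_split:
  assumes fin: "finite (ring_times_upto R t)" and "s \<le> t"
  shows "sorted_list_of_set (ring_times_upto R t)
       = sorted_list_of_set (ring_times_upto R s) @ sorted_list_of_set {u \<in> ring_times_upto R t. s < u}"
proof (rule strict_sorted_equal)
  have "finite (ring_times_upto R s)"
    using fin ring_times_upto_mono[OF \<open>s \<le> t\<close>] finite_subset by blast
  moreover have "ring_times_upto R t = ring_times_upto R s \<union> {u \<in> ring_times_upto R t. s < u}"
    using \<open>s \<le> t\<close> by (auto simp: ring_times_upto_def)
  ultimately show
    "sorted_wrt (<) (sorted_list_of_set (ring_times_upto R s) @ sorted_list_of_set {u \<in> ring_times_upto R t. s < u})"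
    "set (sorted_list_of_set (ring_times_upto R t))
       = set (sorted_list_of_set (ring_times_upto R s) @ sorted_list_of_set {u \<in> ring_times_upto R t. s < u})"
    using fin by (auto simp: sorted_wrt_append ring_times_upto_def)
qed (rule strict_sorted_list_of_set)

lemma graphical_path_meet_mono:
  assumes "finite (ring_times_upto R t)" "s \<le> t" "graphical_path R x s = graphical_path R y s"
  shows "graphical_path R x t = graphical_path R y t"
  using assms(3) unfolding graphical_path_fold sorted_list_of_ring_times_split[OF assms(1,2)] by simp

lemma ring_times_upto_right_const:
  obtains \<delta> where "\<delta> > 0" "\<And>s. t \<le> s \<Longrightarrow> s < t + \<delta> \<Longrightarrow> ring_times_upto R s = ring_times_upto R t"
  | "\<And>s. t < s \<Longrightarrow> infinite (ring_times_upto R s)"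
proof (cases "\<exists>s>t. finite (ring_times_upto R s)")
  case True
  then obtain s where "t < s" and fin: "finite (ring_times_upto R s)" by blast
  define A where "A = insert s {u \<in> ring_times_upto R s. t < u}"
  have "finite A" using fin by (simp add: A_def)
  have "Min A \<in> A" using \<open>finite A\<close> by (rule Min_in) (simp add: A_def)
  have "Min A \<le> s" using \<open>finite A\<close> by (simp add: A_def)
  show ?thesis
  proof (rule that(1))
    show "0 < Min A - t" using \<open>Min A \<in> A\<close> \<open>t < s\<close> by (auto simp: A_def ring_times_upto_def)
    fix s' assume "t \<le> s'" "s' < t + (Min A - t)"
    show "ring_times_upto R s' = ring_times_upto R t"
    proof
      show "ring_times_upto R t \<subseteq> ring_times_upto R s'"
        using \<open>t \<le> s'\<close> by (rule ring_times_upto_mono)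
      show "ring_times_upto R s' \<subseteq> ring_times_upto R t"
      proof
        fix u assume u: "u \<in> ring_times_upto R s'"
        with \<open>s' < t + (Min A - t)\<close> \<open>Min A \<le> s\<close> have "u \<in> ring_times_upto R s" "u < Min A"
          by (auto simp: ring_times_upto_def)
        then have "u \<notin> A" using Min_le[OF \<open>finite A\<close>] by fastforce
        with u \<open>u \<in> ring_times_upto R s\<close> show "u \<in> ring_times_upto R t"
          by (auto simp: A_def ring_times_upto_def)
      qed
    qed
  qed
qed (use that(2) in auto)

lemma ring_times_upto_eq_at_last_ring:
  assumes "finite (ring_times_upto R s)" "0 \<le> s"
  shows "\<exists>s' \<in> insert 0 (ring_times_upto R s). ring_times_upto R s' = ring_times_upto R s"
proof (cases "ring_times_upto R s = {}")
  case True
  with \<open>0 \<le> s\<close> show ?thesis using ring_times_upto_mono[of 0 s R] by auto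
next
  case False
  define m where "m = Max (ring_times_upto R s)"
  have "m \<in> ring_times_upto R s" using assms(1) False by (simp add: m_def)
  moreover have "ring_times_upto R m = ring_times_upto R s"
  proof
    show "ring_times_upto R m \<subseteq> ring_times_upto R s"
      using \<open>m \<in> ring_times_upto R s\<close> by (intro ring_times_upto_mono) (simp add: ring_times_upto_def)
    show "ring_times_upto R s \<subseteq> ring_times_upto R m"
      using Max_ge[OF assms(1)] by (auto simp: m_def ring_times_upto_def)
  qed
  ultimately show ?thesis by blast
qed

text \<open>Meeting times are closed from the right: just after t the ring times are either locally
  constant, or infinitely many, and then every path sits at its starting point.\<close>

lemma graphical_path_meet_right_closed:
  assumes "x \<noteq> y" "0 \<le> t"
    and meet_before: "\<And>\<epsilon>. \<epsilon> > 0 \<Longrightarrow> \<exists>s. 0 \<le> s \<and> s < t + \<epsilon> \<and> graphical_path R x s = graphical_path R y s"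
  shows "\<exists>s. 0 \<le> s \<and> s \<le> t \<and> graphical_path R x s = graphical_path R y s"
proof (rule ring_times_upto_right_const[of t R])
  fix \<delta> :: real
  assume "\<delta> > 0" and const: "\<And>s. t \<le> s \<Longrightarrow> s < t + \<delta> \<Longrightarrow> ring_times_upto R s = ring_times_upto R t"
  then obtain s where s: "0 \<le> s" "s < t + \<delta>" "graphical_path R x s = graphical_path R y s"
    using meet_before by blast
  show ?thesis
  proof (cases "s \<le> t")
    case False
    with s const[of s] have "ring_times_upto R s = ring_times_upto R t" by simp
    with s have "graphical_path R x t = graphical_path R y t"
      using graphical_path_cong by metis
    with \<open>0 \<le> t\<close> show ?thesis by blast
  qed (use s in blast)
next
  assume infinite: "\<And>s. t < s \<Longrightarrow> infinite (ring_times_upto R s)"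
  obtain s where s: "0 \<le> s" "s < t + 1" "graphical_path R x s = graphical_path R y s"
    using meet_before[of 1] by auto
  have "s \<le> t"
  proof (rule ccontr)
    assume "\<not> s \<le> t"
    with s(3) \<open>x \<noteq> y\<close> show False by (simp add: infinite graphical_path_infinite)
  qed
  with s show ?thesis by blast
qed

lemma coal_time_le_iff_meet:
  assumes "0 \<le> t"
  shows "coal_time (graphical_path R x) (graphical_path R y) \<le> ereal t
     \<longleftrightarrow> (\<exists>s. 0 \<le> s \<and> s \<le> t \<and> graphical_path R x s = graphical_path R y s)"
proof
  assume "\<exists>s. 0 \<le> s \<and> s \<le> t \<and> graphical_path R x s = graphical_path R y s"
  then obtain s where "0 \<le> s" "s \<le> t" "graphical_path R x s = graphical_path R y s" by blast
  then show "coal_time (graphical_path R x) (graphical_path R y) \<le> ereal t"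
    unfolding coal_time_def by (intro Inf_lower2[of "ereal s"]) auto
next
  assume le: "coal_time (graphical_path R x) (graphical_path R y) \<le> ereal t"
  show "\<exists>s. 0 \<le> s \<and> s \<le> t \<and> graphical_path R x s = graphical_path R y s"
  proof (cases "x = y")
    case False
    then show ?thesis
    proof (rule graphical_path_meet_right_closed[OF _ assms])
      fix \<epsilon> :: real assume "\<epsilon> > 0"
      with le_less_trans[OF le, of "ereal (t + \<epsilon>)"]
      show "\<exists>s. 0 \<le> s \<and> s < t + \<epsilon> \<and> graphical_path R x s = graphical_path R y s"
        by (auto simp: coal_time_def Inf_less_iff)
    qed
  qed (use assms in auto)
qed

lemma coal_time_le_iff_eq_at:
  assumes "finite (ring_times_upto R t)" "0 \<le> t"
  shows "coal_time (graphical_path R x) (graphical_path R y) \<le> ereal t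
     \<longleftrightarrow> graphical_path R x t = graphical_path R y t"
  unfolding coal_time_le_iff_meet[OF assms(2)]
proof
  assume "\<exists>s. 0 \<le> s \<and> s \<le> t \<and> graphical_path R x s = graphical_path R y s"
  then obtain s where "s \<le> t" "graphical_path R x s = graphical_path R y s" by blast
  then show "graphical_path R x t = graphical_path R y t"
    by (rule graphical_path_meet_mono[OF assms(1)])
qed (use assms(2) in \<open>intro exI[of _ t], simp\<close>)

lemma coal_time_le_iff_meet_at_ring_time:
  assumes "0 \<le> t"
  shows "coal_time (graphical_path R x) (graphical_path R y) \<le> ereal t
     \<longleftrightarrow> x = y \<or> (\<exists>s \<in> insert 0 (ring_times_upto R t).
              finite (ring_times_upto R s) \<and> graphical_path R x s = graphical_path R y s)"
  unfolding coal_time_le_iff_meet[OF assms]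
proof
  assume "\<exists>s. 0 \<le> s \<and> s \<le> t \<and> graphical_path R x s = graphical_path R y s"
  then obtain s where s: "0 \<le> s" "s \<le> t" and meet: "graphical_path R x s = graphical_path R y s"
    by blast
  show "x = y \<or> (\<exists>s \<in> insert 0 (ring_times_upto R t).
          finite (ring_times_upto R s) \<and> graphical_path R x s = graphical_path R y s)"
  proof (cases "finite (ring_times_upto R s)")
    case True
    then obtain s' where "s' \<in> insert 0 (ring_times_upto R s)" "ring_times_upto R s' = ring_times_upto R s"
      using ring_times_upto_eq_at_last_ring \<open>0 \<le> s\<close> by blast
    moreover have "insert 0 (ring_times_upto R s) \<subseteq> insert 0 (ring_times_upto R t)"
      using ring_times_upto_mono[OF \<open>s \<le> t\<close>] by blast
    ultimately show ?thesis
      using True meet graphical_path_cong by (metis subsetD)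
  qed (use meet graphical_path_infinite[of R s] in simp)
next
  assume "x = y \<or> (\<exists>s \<in> insert 0 (ring_times_upto R t).
            finite (ring_times_upto R s) \<and> graphical_path R x s = graphical_path R y s)"
  then show "\<exists>s. 0 \<le> s \<and> s \<le> t \<and> graphical_path R x s = graphical_path R y s"
  proof (elim disjE bexE conjE)
    assume "x = y"
    with assms show ?thesis by blast
  next
    fix s assume "s \<in> insert 0 (ring_times_upto R t)" "graphical_path R x s = graphical_path R y s"
    with assms show ?thesis by (auto simp: ring_times_upto_def)
  qed
qed

section \<open>Ring schedules and measurability\<close>

definition indexed_rings :: "('a \<times> 'a) set \<Rightarrow> (('a \<times> 'a) \<times> nat \<Rightarrow> real) \<Rightarrow> 'a \<Rightarrow> 'a \<Rightarrow> real set" where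
  "indexed_rings E q a b = (if (a, b) \<in> E then range (\<lambda>k. q ((a, b), k)) else {})"

definition ringing_edges :: "('a \<Rightarrow> 'a \<Rightarrow> real set) \<Rightarrow> real \<Rightarrow> ('a \<times> 'a) set" where
  "ringing_edges R s = {(a, b). s \<in> R a b}"

definition edge_step :: "('a \<times> 'a) set \<Rightarrow> 'a \<Rightarrow> 'a" where
  "edge_step E z = (if \<exists>y. z \<noteq> y \<and> (z, y) \<in> E then SOME y. z \<noteq> y \<and> (z, y) \<in> E else z)"

lemma ring_step_eq_edge_step: "ring_step R = (\<lambda>s. edge_step (ringing_edges R s))"
  by (auto simp: fun_eq_iff ring_step_def edge_step_def ringing_edges_def)

lemma mem_indexed_rings: "s \<in> indexed_rings E q a b \<longleftrightarrow> (a, b) \<in> E \<and> (\<exists>k. q ((a, b), k) = s)"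
  by (auto simp: indexed_rings_def)

lemma mem_ring_times_upto_indexed_rings:
  "s \<in> ring_times_upto (indexed_rings E q) t \<longleftrightarrow> 0 \<le> s \<and> s \<le> t \<and> (\<exists>e\<in>E. \<exists>k. q (e, k) = s)"
  by (auto simp: ring_times_upto_def mem_indexed_rings)

text \<open>A schedule lists the indices of all rings in [0,u] in chronological order, together with
  the edges ringing at each of these times. Unlike the sorted list of ring times, it ranges over a
  countable type, so its existence is a measurable event.\<close>

definition ring_schedule :: "('a \<times> 'a) set \<Rightarrow> (('a \<times> 'a) \<times> nat \<Rightarrow> real) \<Rightarrow> real
    \<Rightarrow> (('a \<times> 'a) \<times> nat) list \<Rightarrow> ('a \<times> 'a) set list \<Rightarrow> bool" where
  "ring_schedule E q u ix L \<longleftrightarrow>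
     set ix \<subseteq> E \<times> UNIV \<and> length L = length ix \<and>
     (\<forall>j<length ix. \<forall>k<length ix. j < k \<longrightarrow> q (ix ! j) < q (ix ! k)) \<and>
     (\<forall>j<length ix. 0 \<le> q (ix ! j) \<and> q (ix ! j) \<le> u) \<and>
     (\<forall>e\<in>E. \<forall>k. 0 \<le> q (e, k) \<and> q (e, k) \<le> u \<longrightarrow> (\<exists>j<length ix. q (ix ! j) = q (e, k))) \<and>
     (\<forall>j<length ix. \<forall>e. e \<in> L ! j \<longleftrightarrow> e \<in> E \<and> (\<exists>k. q (e, k) = q (ix ! j)))"

lemma ring_schedule_exists:
  assumes fin: "finite (ring_times_upto (indexed_rings E q) u)"
  shows "\<exists>ix. ring_schedule E q u ix
           (map (ringing_edges (indexed_rings E q)) (sorted_list_of_set (ring_times_upto (indexed_rings E q) u)))"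
proof -
  define ts where "ts = sorted_list_of_set (ring_times_upto (indexed_rings E q) u)"
  have set_ts: "set ts = ring_times_upto (indexed_rings E q) u" and "sorted_wrt (<) ts"
    using fin by (simp_all add: ts_def)
  have "\<exists>i. i \<in> E \<times> UNIV \<and> q i = s" if "s \<in> set ts" for s
    using that by (auto simp: set_ts mem_ring_times_upto_indexed_rings)
  then obtain idx where idx: "\<And>s. s \<in> set ts \<Longrightarrow> idx s \<in> E \<times> UNIV \<and> q (idx s) = s" by metis
  define ix where "ix = map idx ts"
  have q_ix: "q (ix ! j) = ts ! j" if "j < length ix" for j
    using that idx by (simp add: ix_def)
  have "ring_schedule E q u ix (map (ringing_edges (indexed_rings E q)) ts)"
    unfolding ring_schedule_def
  proof (intro conjI allI impI ballI)
    show "set ix \<subseteq> E \<times> UNIV" unfolding ix_def set_map using idx by blast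
    show "length (map (ringing_edges (indexed_rings E q)) ts) = length ix" by (simp add: ix_def)
    fix j assume j: "j < length ix"
    then have "ts ! j \<in> ring_times_upto (indexed_rings E q) u" by (simp add: ix_def flip: set_ts)
    then show "0 \<le> q (ix ! j)" "q (ix ! j) \<le> u"
      using q_ix[OF j] by (auto simp: ring_times_upto_def)
    show "q (ix ! j) < q (ix ! k)" if "k < length ix" "j < k" for k
      using that j q_ix \<open>sorted_wrt (<) ts\<close> by (simp add: sorted_wrt_iff_nth_less ix_def)
    show "e \<in> map (ringing_edges (indexed_rings E q)) ts ! j \<longleftrightarrow> e \<in> E \<and> (\<exists>k. q (e, k) = q (ix ! j))" for e
      using j q_ix[OF j] by (cases e) (simp add: ix_def ringing_edges_def mem_indexed_rings)
  next
    fix e k assume "e \<in> E" "0 \<le> q (e, k) \<and> q (e, k) \<le> u"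
    then have "q (e, k) \<in> set ts" by (auto simp: set_ts mem_ring_times_upto_indexed_rings)
    then show "\<exists>j<length ix. q (ix ! j) = q (e, k)"
      using q_ix by (metis in_set_conv_nth ix_def length_map)
  qed
  then show ?thesis by (auto simp: ts_def)
qed

lemma set_ring_schedule_times:
  assumes "ring_schedule E q u ix L"
  shows "set (map q ix) = ring_times_upto (indexed_rings E q) u"
proof
  show "set (map q ix) \<subseteq> ring_times_upto (indexed_rings E q) u"
  proof
    fix s assume "s \<in> set (map q ix)"
    then obtain j where j: "j < length ix" "s = q (ix ! j)" by (metis in_set_conv_nth length_map nth_map)
    with assms have "ix ! j \<in> E \<times> UNIV" unfolding ring_schedule_def by (meson nth_mem subsetD)
    then obtain e k where "ix ! j = (e, k)" "e \<in> E" by blast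
    with assms j show "s \<in> ring_times_upto (indexed_rings E q) u"
      unfolding ring_schedule_def mem_ring_times_upto_indexed_rings by auto
  qed
  show "ring_times_upto (indexed_rings E q) u \<subseteq> set (map q ix)"
  proof
    fix s assume "s \<in> ring_times_upto (indexed_rings E q) u"
    then obtain e k where "e \<in> E" "q (e, k) = s" "0 \<le> s" "s \<le> u"
      by (auto simp: mem_ring_times_upto_indexed_rings)
    with assms obtain j where "j < length ix" "q (ix ! j) = s"
      unfolding ring_schedule_def by blast
    then show "s \<in> set (map q ix)" by (metis length_map nth_map nth_mem)
  qed
qed

lemma ring_schedule_unique:
  assumes "ring_schedule E q u ix L"
  shows "finite (ring_times_upto (indexed_rings E q) u)"
    and "map (ringing_edges (indexed_rings E q)) (sorted_list_of_set (ring_times_upto (indexed_rings E q) u)) = L"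
proof -
  note set_ts = set_ring_schedule_times[OF assms]
  then show "finite (ring_times_upto (indexed_rings E q) u)" by (metis finite_set)
  have "sorted_wrt (<) (map q ix)"
    using assms by (auto simp: ring_schedule_def sorted_wrt_iff_nth_less)
  then have "sorted_list_of_set (ring_times_upto (indexed_rings E q) u) = map q ix"
    unfolding set_ts[symmetric] strict_sorted_iff by (blast intro: sorted_list_of_set.idem_if_sorted_distinct)
  moreover have "map (ringing_edges (indexed_rings E q)) (map q ix) = L"
  proof (rule nth_equalityI)
    show "length (map (ringing_edges (indexed_rings E q)) (map q ix)) = length L"
      using assms by (simp add: ring_schedule_def)
    fix j assume "j < length (map (ringing_edges (indexed_rings E q)) (map q ix))"
    with assms show "map (ringing_edges (indexed_rings E q)) (map q ix) ! j = L ! j"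
      by (auto simp: set_eq_iff ring_schedule_def ringing_edges_def mem_indexed_rings)
  qed
  ultimately show "map (ringing_edges (indexed_rings E q)) (sorted_list_of_set (ring_times_upto (indexed_rings E q) u)) = L"
    by simp
qed

lemma finite_ring_times_iff_schedule:
  "finite (ring_times_upto (indexed_rings E q) u) \<longleftrightarrow> (\<exists>ix L. ring_schedule E q u ix L)"
  using ring_schedule_exists ring_schedule_unique(1) by blast

lemma graphical_path_eq_iff_schedule:
  "graphical_path (indexed_rings E q) x u = y \<longleftrightarrow>
     (\<nexists>ix L. ring_schedule E q u ix L) \<and> x = y \<or> (\<exists>ix L. ring_schedule E q u ix L \<and> fold edge_step L x = y)"
proof (cases "finite (ring_times_upto (indexed_rings E q) u)")
  case True
  define L where
    "L = map (ringing_edges (indexed_rings E q)) (sorted_list_of_set (ring_times_upto (indexed_rings E q) u))"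
  have "graphical_path (indexed_rings E q) x u = fold edge_step L x"
    by (simp add: graphical_path_fold L_def fold_map ring_step_eq_edge_step comp_def)
  moreover have "L' = L" if "ring_schedule E q u ix L'" for ix L'
    using ring_schedule_unique(2)[OF that] by (simp add: L_def)
  moreover have "\<exists>ix. ring_schedule E q u ix L"
    using ring_schedule_exists[OF True] by (simp add: L_def)
  ultimately show ?thesis by (metis (no_types, lifting))
next
  case False
  moreover have "\<nexists>ix L. ring_schedule E q u ix L"
    using False finite_ring_times_iff_schedule by blast
  ultimately show ?thesis by (simp add: graphical_path_infinite)
qed

lemma measurable_count_space_countableI:
  fixes f :: "'m \<Rightarrow> 'a::countable"
  assumes "\<And>y. Measurable.pred M (\<lambda>\<omega>. f \<omega> = y)"
  shows "f \<in> measurable M (count_space UNIV)"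
proof -
  have "f -` {y} \<inter> space M \<in> sets M" for y
    using assms[of y] by (simp add: pred_def vimage_def Int_def conj_commute)
  then show ?thesis by (simp add: measurable_count_space_eq2_countable)
qed

lemma measurable_Collect_finite:
  fixes P :: "'a::finite \<Rightarrow> 'm \<Rightarrow> bool"
  assumes [measurable]: "\<And>i. Measurable.pred M (P i)"
  shows "(\<lambda>\<omega>. {i. P i \<omega>}) \<in> measurable M (count_space UNIV)"
  by (rule measurable_count_space_countableI) (unfold set_eq_iff mem_Collect_eq, measurable)

lemma measurable_fibre_of_index:
  fixes G :: "'m \<Rightarrow> 'i::finite \<Rightarrow> 'b::countable"
  assumes "G \<in> measurable M (count_space UNIV)" "\<iota> \<in> measurable M (count_space UNIV)"
  shows "(\<lambda>\<omega>. {i. G \<omega> i = G \<omega> (\<iota> \<omega>)}) \<in> measurable M (count_space UNIV)"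
proof -
  have "(\<lambda>\<omega>. (G \<omega>, \<iota> \<omega>)) \<in> measurable M (count_space UNIV)"
    using assms by measurable
  then have "(\<lambda>\<omega>. (\<lambda>(\<phi>, v). {i. \<phi> i = \<phi> v}) (G \<omega>, \<iota> \<omega>)) \<in> measurable M (count_space UNIV)"
    by (rule measurable_compose) simp
  then show ?thesis by simp
qed

lemma coal_time_le_indexed_rings_iff:
  assumes "0 \<le> t"
  shows "coal_time (graphical_path (indexed_rings E q) x) (graphical_path (indexed_rings E q) y) \<le> ereal t
   \<longleftrightarrow> x = y
     \<or> finite (ring_times_upto (indexed_rings E q) 0)
         \<and> graphical_path (indexed_rings E q) x 0 = graphical_path (indexed_rings E q) y 0
     \<or> (\<exists>e\<in>E. \<exists>k. 0 \<le> q (e, k) \<and> q (e, k) \<le> t \<and> finite (ring_times_upto (indexed_rings E q) (q (e, k)))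
         \<and> graphical_path (indexed_rings E q) x (q (e, k)) = graphical_path (indexed_rings E q) y (q (e, k)))"
proof -
  have "(\<exists>s\<in>ring_times_upto (indexed_rings E q) t. P s)
    \<longleftrightarrow> (\<exists>e\<in>E. \<exists>k. 0 \<le> q (e, k) \<and> q (e, k) \<le> t \<and> P (q (e, k)))" for P
    unfolding Bex_def mem_ring_times_upto_indexed_rings by blast
  then show ?thesis
    unfolding coal_time_le_iff_meet_at_ring_time[OF assms] by simp
qed

context
  fixes N :: "'m measure" and q :: "('a::finite \<times> 'a) \<times> nat \<Rightarrow> 'm \<Rightarrow> real"
  assumes q_measurable[measurable]: "\<And>i. q i \<in> borel_measurable N"
begin

lemma pred_ring_schedule:
  assumes [measurable]: "u \<in> borel_measurable N"
  shows "Measurable.pred N (\<lambda>\<omega>. ring_schedule E (\<lambda>i. q i \<omega>) (u \<omega>) ix L)"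
  unfolding ring_schedule_def by measurable

lemma pred_finite_ring_times:
  assumes "u \<in> borel_measurable N"
  shows "Measurable.pred N (\<lambda>\<omega>. finite (ring_times_upto (indexed_rings E (\<lambda>i. q i \<omega>)) (u \<omega>)))"
proof -
  note pred_ring_schedule[OF assms, measurable]
  show ?thesis unfolding finite_ring_times_iff_schedule by measurable
qed

lemma measurable_graphical_path:
  assumes "u \<in> borel_measurable N"
  shows "(\<lambda>\<omega>. graphical_path (indexed_rings E (\<lambda>i. q i \<omega>)) x (u \<omega>)) \<in> measurable N (count_space UNIV)"
proof -
  note pred_ring_schedule[OF assms, measurable]
  show ?thesis
    by (rule measurable_count_space_countableI) (unfold graphical_path_eq_iff_schedule, measurable)
qed

lemma pred_coal_time_le:
  assumes "0 \<le> t"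
  shows "Measurable.pred N (\<lambda>\<omega>. coal_time (graphical_path (indexed_rings E (\<lambda>i. q i \<omega>)) x)
    (graphical_path (indexed_rings E (\<lambda>i. q i \<omega>)) y) \<le> ereal t)"
proof -
  have [measurable]: "Measurable.pred N (\<lambda>\<omega>. finite (ring_times_upto (indexed_rings E (\<lambda>i. q i \<omega>)) (u \<omega>))
      \<and> graphical_path (indexed_rings E (\<lambda>i. q i \<omega>)) x (u \<omega>) = graphical_path (indexed_rings E (\<lambda>i. q i \<omega>)) y (u \<omega>))"
    if "u \<in> borel_measurable N" for u
  proof -
    note pred_finite_ring_times[OF that, measurable] measurable_graphical_path[OF that, measurable]
    show ?thesis by measurable
  qed
  show ?thesis
    unfolding coal_time_le_indexed_rings_iff[OF assms] by measurable
qed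

end

section \<open>Exponential interarrival times\<close>

context prob_space
begin

context
  fixes Y :: "'i \<Rightarrow> 'a \<Rightarrow> real" and I :: "'i set" and f :: "nat \<Rightarrow> 'i" and l t :: real
  assumes indep: "indep_vars (\<lambda>_. borel) Y I" and "inj f" and "range f \<subseteq> I"
    and exponential: "\<And>k. distributed M lborel (Y (f k)) (exponential_density l)"
    and "0 < l" and "0 \<le> t"
begin

lemma prob_all_exponential_le:
  "\<P>(\<omega> in M. \<forall>k\<le>K. Y (f k) \<omega> \<le> t) = (1 - exp (- t * l)) ^ Suc K"
proof -
  have "indep_sets (\<lambda>i. {Y i -` A \<inter> space M | A. A \<in> sets borel}) I"
    using indep unfolding indep_vars_def2 by simp
  then have "prob (\<Inter>i\<in>f ` {..K}. Y i -` {..t} \<inter> space M) = (\<Prod>i\<in>f ` {..K}. prob (Y i -` {..t} \<inter> space M))"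
    by (rule indep_setsD) (use \<open>range f \<subseteq> I\<close> in \<open>auto intro!: exI[of _ "{..t}"]\<close>)
  moreover have "(\<Inter>i\<in>f ` {..K}. Y i -` {..t} \<inter> space M) = {\<omega> \<in> space M. \<forall>k\<le>K. Y (f k) \<omega> \<le> t}"
    by auto
  moreover have "(\<Prod>i\<in>f ` {..K}. prob (Y i -` {..t} \<inter> space M)) = (\<Prod>k\<le>K. prob (Y (f k) -` {..t} \<inter> space M))"
    using \<open>inj f\<close> by (simp add: prod.reindex inj_on_def)
  moreover have "prob (Y (f k) -` {..t} \<inter> space M) = 1 - exp (- t * l)" for k
  proof -
    have "Y (f k) -` {..t} \<inter> space M = {\<omega> \<in> space M. Y (f k) \<omega> \<le> t}" by auto
    then show ?thesis using exponential_distributedD_le[OF exponential \<open>0 \<le> t\<close> \<open>0 < l\<close>] by simp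
  qed
  ultimately show ?thesis by simp
qed

lemma AE_exists_exponential_gt:
  "AE \<omega> in M. \<exists>k. t < Y (f k) \<omega>"
proof -
  have [measurable]: "Y (f k) \<in> borel_measurable M" for k
    using distributed_measurable[OF exponential] by simp
  define \<rho> where "\<rho> = 1 - exp (- t * l)"
  define B where "B = {\<omega> \<in> space M. \<forall>k. Y (f k) \<omega> \<le> t}"
  have "B \<in> events" unfolding B_def by measurable
  have "prob B \<le> \<rho> ^ Suc K" for K
  proof -
    have "prob B \<le> \<P>(\<omega> in M. \<forall>k\<le>K. Y (f k) \<omega> \<le> t)"
      by (rule finite_measure_mono) (auto simp: B_def)
    then show ?thesis by (simp add: prob_all_exponential_le \<rho>_def)
  qed
  moreover have "(\<lambda>K. \<rho> ^ Suc K) \<longlonglongrightarrow> 0"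
    using \<open>0 < l\<close> \<open>0 \<le> t\<close> by (intro LIMSEQ_Suc LIMSEQ_power_zero) (simp add: \<rho>_def)
  ultimately have "prob B \<le> 0" using LIMSEQ_le_const[of "\<lambda>K. \<rho> ^ Suc K" 0 "prob B"] by blast
  with \<open>B \<in> events\<close> have "AE \<omega> in M. \<omega> \<notin> B"
    using prob_eq_0[of B] measure_nonneg[of M B] by linarith
  then show ?thesis by (auto simp: B_def not_le)
qed

lemma AE_exponential_partial_sums_gt:
  "AE \<omega> in M. \<exists>K. \<forall>k\<ge>K. t < (\<Sum>j\<le>k. Y (f j) \<omega>)"
proof -
  have [measurable]: "Y (f k) \<in> borel_measurable M" for k
    using distributed_measurable[OF exponential] by simp
  have "AE \<omega> in M. 0 < Y (f k) \<omega>" for k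
    using exponential_distributedD_gt[OF exponential order_refl \<open>0 < l\<close>]
    by (simp flip: prob_Collect_eq_1)
  then have "AE \<omega> in M. \<forall>k. 0 < Y (f k) \<omega>" by (simp add: AE_all_countable)
  with AE_exists_exponential_gt show ?thesis
  proof eventually_elim
    case (elim \<omega>)
    then obtain K where "t < Y (f K) \<omega>" by blast
    moreover have "Y (f K) \<omega> \<le> (\<Sum>j\<le>k. Y (f j) \<omega>)" if "K \<le> k" for k
      using elim that by (intro member_le_sum) (auto intro: less_imp_le)
    ultimately show ?case by (meson less_le_trans)
  qed
qed

end

end

section \<open>Inverse fibre sizes\<close>

lemma sum_inverse_card_fibres:
  assumes "finite A"
  shows "(\<Sum>v\<in>A. 1 / real (card {i \<in> A. g i = g v})) = real (card (g ` A))"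
proof -
  have "(\<Sum>v\<in>A. 1 / real (card {i \<in> A. g i = g v}))
      = (\<Sum>w\<in>g ` A. \<Sum>v\<in>{v \<in> A. g v = w}. 1 / real (card {i \<in> A. g i = g v}))"
    using assms by (intro sum.group[symmetric]) auto
  also have "\<dots> = (\<Sum>w\<in>g ` A. \<Sum>v\<in>{v \<in> A. g v = w}. 1 / real (card {i \<in> A. g i = w}))"
    by (intro sum.cong) auto
  also have "\<dots> = (\<Sum>w\<in>g ` A. 1)"
    using assms by (intro sum.cong) (auto simp: card_eq_0_iff)
  finally show ?thesis by simp
qed

lemma (in prob_space) integral_finite_valued:
  fixes F :: "'a \<Rightarrow> 'b::finite" and \<phi> :: "'b \<Rightarrow> real"
  assumes F: "F \<in> measurable M (count_space UNIV)"
  shows "(\<integral>\<omega>. \<phi> (F \<omega>) \<partial>M) = (\<Sum>y\<in>UNIV. \<phi> y * \<P>(\<omega> in M. F \<omega> = y))"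
proof -
  have sets: "{\<omega> \<in> space M. F \<omega> = y} \<in> events" for y
    using F by measurable
  have "(\<integral>\<omega>. \<phi> (F \<omega>) \<partial>M) = (\<integral>\<omega>. (\<Sum>y\<in>UNIV. \<phi> y * indicator {\<omega> \<in> space M. F \<omega> = y} \<omega>) \<partial>M)"
  proof (rule Bochner_Integration.integral_cong[OF refl])
    fix \<omega> assume "\<omega> \<in> space M"
    then have "(\<Sum>y\<in>UNIV. \<phi> y * indicator {\<omega> \<in> space M. F \<omega> = y} \<omega>)
        = (\<Sum>y\<in>{F \<omega>}. \<phi> y * indicator {\<omega> \<in> space M. F \<omega> = y} \<omega>)"
      by (intro sum.mono_neutral_right) (auto simp: indicator_def)
    with \<open>\<omega> \<in> space M\<close> show "\<phi> (F \<omega>) = (\<Sum>y\<in>UNIV. \<phi> y * indicator {\<omega> \<in> space M. F \<omega> = y} \<omega>)"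
      by simp
  qed
  also have "\<dots> = (\<Sum>y\<in>UNIV. \<integral>\<omega>. \<phi> y * indicator {\<omega> \<in> space M. F \<omega> = y} \<omega> \<partial>M)"
    by (rule Bochner_Integration.integral_sum)
      (auto intro: sets simp: emeasure_eq_measure)
  also have "\<dots> = (\<Sum>y\<in>UNIV. \<phi> y * \<P>(\<omega> in M. F \<omega> = y))"
    using sets by simp
  finally show ?thesis .
qed

lemma (in prob_space) expectation_inverse_card_fibre:
  fixes G :: "'a \<Rightarrow> 'i::finite \<Rightarrow> 'b::finite" and \<iota> :: "'a \<Rightarrow> 'i"
  assumes G: "G \<in> measurable M (count_space UNIV)" and \<iota>: "\<iota> \<in> measurable M (count_space UNIV)"
    and uniform_indep:
      "\<And>\<phi> v. \<P>(\<omega> in M. G \<omega> = \<phi> \<and> \<iota> \<omega> = v) = \<P>(\<omega> in M. G \<omega> = \<phi>) / CARD('i)"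
  shows "(\<integral>\<omega>. 1 / real (card {i. G \<omega> i = G \<omega> (\<iota> \<omega>)}) \<partial>M)
       = (\<integral>\<omega>. real (card (range (G \<omega>))) \<partial>M) / CARD('i)"
proof -
  have "(\<lambda>\<omega>. (G \<omega>, \<iota> \<omega>)) \<in> measurable M (count_space UNIV)"
    using G \<iota> by measurable
  from integral_finite_valued[OF this, of "\<lambda>(\<phi>, v). 1 / real (card {i. \<phi> i = \<phi> v})"]
  have "(\<integral>\<omega>. 1 / real (card {i. G \<omega> i = G \<omega> (\<iota> \<omega>)}) \<partial>M)
      = (\<Sum>z\<in>UNIV. (case z of (\<phi>, v) \<Rightarrow> 1 / real (card {i. \<phi> i = \<phi> v})) * \<P>(\<omega> in M. (G \<omega>, \<iota> \<omega>) = z))"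
    by simp
  also have "\<dots> = (\<Sum>(\<phi>, v)\<in>UNIV \<times> UNIV. 1 / real (card {i. \<phi> i = \<phi> v}) * \<P>(\<omega> in M. G \<omega> = \<phi> \<and> \<iota> \<omega> = v))"
    by (intro sum.cong) auto
  also have "\<dots> = (\<Sum>\<phi>\<in>UNIV. \<Sum>v\<in>UNIV. 1 / real (card {i. \<phi> i = \<phi> v}) * \<P>(\<omega> in M. G \<omega> = \<phi> \<and> \<iota> \<omega> = v))"
    by (rule sum.cartesian_product[symmetric])
  also have "\<dots> = (\<Sum>\<phi>\<in>UNIV. \<P>(\<omega> in M. G \<omega> = \<phi>) / CARD('i) * (\<Sum>v\<in>UNIV. 1 / real (card {i. \<phi> i = \<phi> v})))"
    by (simp add: uniform_indep sum_distrib_left sum_divide_distrib mult_ac)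
  also have "\<dots> = (\<Sum>\<phi>\<in>UNIV. real (card (range \<phi>)) * \<P>(\<omega> in M. G \<omega> = \<phi>)) / CARD('i)"
    by (simp add: sum_inverse_card_fibres[of UNIV, simplified] sum_divide_distrib mult.commute)
  also have "\<dots> = (\<integral>\<omega>. real (card (range (G \<omega>))) \<partial>M) / CARD('i)"
    using integral_finite_valued[OF G, of "\<lambda>\<phi>. real (card (range \<phi>))"] by simp
  finally show ?thesis .
qed

section \<open>Coalescing random walks\<close>

locale graphical_representation = prob_space M
  for M :: "'m measure" and r :: "'a::finite \<Rightarrow> 'a \<Rightarrow> real" and tau :: "'a \<Rightarrow> 'a \<Rightarrow> nat \<Rightarrow> 'm \<Rightarrow> real" +
  assumes exponential_interarrival: "\<And>x y k. x \<noteq> y \<Longrightarrow> 0 < r x y \<Longrightarrow>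
      distributed M lborel (tau x y k) (exponential_density (r x y))"
    and indep_interarrival: "indep_vars (\<lambda>_. borel) (\<lambda>(x, y, k). tau x y k) {(x, y, k). x \<noteq> y \<and> 0 < r x y}"
begin

abbreviation rings :: "'m \<Rightarrow> 'a \<Rightarrow> 'a \<Rightarrow> real set" where
  "rings \<omega> \<equiv> ring_sets r (\<lambda>x y k. tau x y k \<omega>)"

definition positions :: "real \<Rightarrow> 'm \<Rightarrow> 'a \<Rightarrow> 'a" where
  "positions t \<omega> x = graphical_path (rings \<omega>) x t"

definition active_edges :: "('a \<times> 'a) set" where
  "active_edges = {(x, y). x \<noteq> y \<and> 0 < r x y}"

fun arrival :: "('a \<times> 'a) \<times> nat \<Rightarrow> 'm \<Rightarrow> real" where
  "arrival ((x, y), k) \<omega> = (if (x, y) \<in> active_edges then \<Sum>j\<le>k. tau x y j \<omega> else 0)"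

lemma rings_eq_indexed_rings: "rings \<omega> = indexed_rings active_edges (\<lambda>i. arrival i \<omega>)"
  by (auto simp: fun_eq_iff ring_sets_def indexed_rings_def arrival_times_def active_edges_def)

definition interarrival_sigma :: "'m measure" where
  "interarrival_sigma = sigma (space M)
     {tau x y k -` B \<inter> space M | x y k B. x \<noteq> y \<and> 0 < r x y \<and> B \<in> sets borel}"

lemma
  shows space_interarrival_sigma: "space interarrival_sigma = space M"
    and sets_interarrival_sigma: "sets interarrival_sigma = sigma_sets (space M)
      {tau x y k -` B \<inter> space M | x y k B. x \<noteq> y \<and> 0 < r x y \<and> B \<in> sets borel}"
  unfolding interarrival_sigma_def by (subst sets_measure_of space_measure_of; auto)+

lemma tau_measurable_interarrival_sigma:
  assumes "(x, y) \<in> active_edges"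
  shows "tau x y k \<in> borel_measurable interarrival_sigma"
proof (rule measurableI)
  fix B :: "real set" assume "B \<in> sets borel"
  with assms show "tau x y k -` B \<inter> space interarrival_sigma \<in> sets interarrival_sigma"
    unfolding space_interarrival_sigma sets_interarrival_sigma active_edges_def
    by (intro sigma_sets.Basic) blast
qed (simp add: space_interarrival_sigma)

lemma subalgebra_interarrival_sigma: "subalgebra M interarrival_sigma"
proof -
  have "tau x y k -` B \<inter> space M \<in> sets M" if "x \<noteq> y" "0 < r x y" "B \<in> sets borel" for x y k B
    using distributed_measurable[OF exponential_interarrival[OF that(1,2)]] that(3) by simp
  then show ?thesis
    unfolding subalgebra_def space_interarrival_sigma sets_interarrival_sigma
    by (auto intro!: sets.sigma_sets_subset)
qed

lemma arrival_measurable_interarrival_sigma: "arrival i \<in> borel_measurable interarrival_sigma"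
proof -
  obtain x y k where i: "i = ((x, y), k)" by (metis prod.collapse)
  have "arrival i = (\<lambda>\<omega>. if (x, y) \<in> active_edges then \<Sum>j\<le>k. tau x y j \<omega> else 0)"
    by (simp add: i fun_eq_iff)
  then show ?thesis
    using tau_measurable_interarrival_sigma[of x y] by (cases "(x, y) \<in> active_edges") simp_all
qed

lemma measurable_positions_interarrival_sigma:
  "positions t \<in> measurable interarrival_sigma (count_space UNIV)"
proof -
  have [measurable]: "(\<lambda>\<omega>. positions t \<omega> x) \<in> measurable interarrival_sigma (count_space UNIV)" for x
    unfolding positions_def rings_eq_indexed_rings
    by (rule measurable_graphical_path[OF arrival_measurable_interarrival_sigma]) simp
  show ?thesis
    by (rule measurable_count_space_countableI) (unfold fun_eq_iff, measurable)
qed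

lemma measurable_positions: "positions t \<in> measurable M (count_space UNIV)"
  by (rule measurable_from_subalg[OF subalgebra_interarrival_sigma measurable_positions_interarrival_sigma])

lemma AE_arrivals_eventually_gt:
  assumes "e \<in> active_edges" "0 \<le> t"
  shows "AE \<omega> in M. \<exists>K. \<forall>k\<ge>K. t < arrival (e, k) \<omega>"
proof -
  obtain x y where e: "e = (x, y)" "x \<noteq> y" "0 < r x y"
    using assms(1) by (auto simp: active_edges_def)
  have "AE \<omega> in M. \<exists>K. \<forall>k\<ge>K. t < (\<Sum>j\<le>k. (\<lambda>(x, y, k). tau x y k) (x, y, j) \<omega>)"
  proof (rule AE_exponential_partial_sums_gt[OF indep_interarrival, where f = "\<lambda>k. (x, y, k)" and l = "r x y"])
    show "distributed M lborel ((\<lambda>(x, y, k). tau x y k) (x, y, k)) (exponential_density (r x y))" for k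
      using exponential_interarrival[OF e(2,3)] by simp
    show "inj (\<lambda>k. (x, y, k))" by (simp add: inj_on_def)
    show "range (\<lambda>k. (x, y, k)) \<subseteq> {(x, y, k). x \<noteq> y \<and> 0 < r x y}" using e(2,3) by auto
  qed fact+
  then show ?thesis using assms(1) by (simp add: e(1))
qed

lemma AE_finite_ring_times:
  assumes "0 \<le> t"
  shows "AE \<omega> in M. finite (ring_times_upto (rings \<omega>) t)"
proof -
  have "AE \<omega> in M. \<forall>e\<in>active_edges. \<exists>K. \<forall>k\<ge>K. t < arrival (e, k) \<omega>"
    using AE_arrivals_eventually_gt[OF _ assms] by (intro AE_finite_allI) auto
  then show ?thesis
  proof eventually_elim
    case (elim \<omega>)
    from bchoice[OF elim] obtain K where K: "\<forall>e\<in>active_edges. \<forall>k\<ge>K e. t < arrival (e, k) \<omega>"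
      by blast
    have "ring_times_upto (rings \<omega>) t \<subseteq> (\<Union>e\<in>active_edges. (\<lambda>k. arrival (e, k) \<omega>) ` {..<K e})"
    proof
      fix s assume "s \<in> ring_times_upto (rings \<omega>) t"
      then obtain e k where "e \<in> active_edges" "arrival (e, k) \<omega> = s" "s \<le> t"
        by (auto simp: rings_eq_indexed_rings mem_ring_times_upto_indexed_rings)
      moreover have "k < K e"
      proof (rule ccontr)
        assume "\<not> k < K e"
        with K \<open>e \<in> active_edges\<close> have "t < arrival (e, k) \<omega>" by simp
        with \<open>arrival (e, k) \<omega> = s\<close> \<open>s \<le> t\<close> show False by simp
      qed
      ultimately show "s \<in> (\<Union>e\<in>active_edges. (\<lambda>k. arrival (e, k) \<omega>) ` {..<K e})" by blast
    qed
    then show ?case by (rule finite_subset) auto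
  qed
qed

lemma AE_coal_time_le_iff_positions_eq:
  assumes "0 \<le> t"
  shows "AE \<omega> in M. \<forall>x y. coal_time (graphical_path (rings \<omega>) x) (graphical_path (rings \<omega>) y) \<le> ereal t
    \<longleftrightarrow> positions t \<omega> x = positions t \<omega> y"
  using AE_finite_ring_times[OF assms]
  by eventually_elim (simp add: positions_def coal_time_le_iff_eq_at assms)

lemma pred_coal_time_le_rings:
  assumes "0 \<le> t"
  shows "Measurable.pred M
    (\<lambda>\<omega>. coal_time (graphical_path (rings \<omega>) x) (graphical_path (rings \<omega>) y) \<le> ereal t)"
  unfolding rings_eq_indexed_rings
  using measurable_from_subalg[OF subalgebra_interarrival_sigma arrival_measurable_interarrival_sigma]
  by (rule pred_coal_time_le[OF _ assms])

lemma measurable_coalesced_set: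
  assumes "0 \<le> t" and [measurable]: "\<iota> \<in> measurable M (count_space UNIV)"
  shows "(\<lambda>\<omega>. {i. coal_time (graphical_path (rings \<omega>) i) (graphical_path (rings \<omega>) (\<iota> \<omega>)) \<le> ereal t})
    \<in> measurable M (count_space UNIV)"
proof (rule measurable_Collect_finite)
  fix i
  note pred_coal_time_le_rings[OF assms(1), measurable]
  have "Measurable.pred M (\<lambda>\<omega>. \<exists>v. \<iota> \<omega> = v \<and>
      coal_time (graphical_path (rings \<omega>) i) (graphical_path (rings \<omega>) v) \<le> ereal t)"
    by measurable
  then show "Measurable.pred M (\<lambda>\<omega>. coal_time (graphical_path (rings \<omega>) i)
      (graphical_path (rings \<omega>) (\<iota> \<omega>)) \<le> ereal t)"
    by simp
qed

lemma integral_coalesced_eq_integral_fibre: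
  assumes "0 \<le> t" and \<iota>: "\<iota> \<in> measurable M (count_space UNIV)"
  shows "(\<integral>\<omega>. 1 / real (card {i. coal_time (graphical_path (rings \<omega>) i)
      (graphical_path (rings \<omega>) (\<iota> \<omega>)) \<le> ereal t}) \<partial>M)
    = (\<integral>\<omega>. 1 / real (card {i. positions t \<omega> i = positions t \<omega> (\<iota> \<omega>)}) \<partial>M)"
proof (rule integral_cong_AE)
  show "(\<lambda>\<omega>. 1 / real (card {i. coal_time (graphical_path (rings \<omega>) i)
      (graphical_path (rings \<omega>) (\<iota> \<omega>)) \<le> ereal t})) \<in> borel_measurable M"
    using measurable_coalesced_set[OF assms] by (rule measurable_compose) simp
  show "(\<lambda>\<omega>. 1 / real (card {i. positions t \<omega> i = positions t \<omega> (\<iota> \<omega>)})) \<in> borel_measurable M"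
    using measurable_fibre_of_index[OF measurable_positions \<iota>] by (rule measurable_compose) simp
  show "AE \<omega> in M. 1 / real (card {i. coal_time (graphical_path (rings \<omega>) i)
      (graphical_path (rings \<omega>) (\<iota> \<omega>)) \<le> ereal t})
    = 1 / real (card {i. positions t \<omega> i = positions t \<omega> (\<iota> \<omega>)})"
    using AE_coal_time_le_iff_positions_eq[OF assms(1)] by eventually_elim simp
qed

lemma prob_positions_and_index:
  fixes \<iota> :: "'m \<Rightarrow> 'a"
  assumes uniform: "\<And>v. \<P>(\<omega> in M. \<iota> \<omega> = v) = 1 / CARD('a)"
    and indep: "indep_set (sigma_sets (space M) {\<iota> -` {v} \<inter> space M | v. True}) (sets interarrival_sigma)"
  shows "\<P>(\<omega> in M. positions t \<omega> = \<phi> \<and> \<iota> \<omega> = v) = \<P>(\<omega> in M. positions t \<omega> = \<phi>) / CARD('a)"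
proof -
  have "\<iota> -` {v} \<inter> space M \<in> sigma_sets (space M) {\<iota> -` {v} \<inter> space M | v. True}"
    by (rule sigma_sets.Basic) blast
  moreover have "positions t -` {\<phi>} \<inter> space M \<in> sets interarrival_sigma"
    using measurable_sets[OF measurable_positions_interarrival_sigma, of "{\<phi>}"]
    by (simp add: space_interarrival_sigma)
  ultimately have "prob ((\<iota> -` {v} \<inter> space M) \<inter> (positions t -` {\<phi>} \<inter> space M))
      = prob (\<iota> -` {v} \<inter> space M) * prob (positions t -` {\<phi>} \<inter> space M)"
    by (rule indep_setD[OF indep])
  moreover have "(\<iota> -` {v} \<inter> space M) \<inter> (positions t -` {\<phi>} \<inter> space M)
      = {\<omega> \<in> space M. positions t \<omega> = \<phi> \<and> \<iota> \<omega> = v}" by auto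
  ultimately show ?thesis
    using uniform[of v] by (simp add: vimage_def Int_def conj_commute)
qed

end

theorem lemma2p1:
  fixes M :: "'m measure"
    and r :: "'a::finite \<Rightarrow> 'a \<Rightarrow> real"
    and tau :: "'a \<Rightarrow> 'a \<Rightarrow> nat \<Rightarrow> 'm \<Rightarrow> real"
    and iota :: "'m \<Rightarrow> 'a"
    and t :: real
  assumes "prob_space M"
    and rates_nonneg: "\<And>x y. 0 \<le> r x y"
    and rates_sym: "\<And>x y. r x y = r y x"
    and irred: "irreducible_rates r"
    and exp_interarrival: "\<And>x y k. x \<noteq> y \<Longrightarrow> 0 < r x y \<Longrightarrow>
        distributed M lborel (tau x y k) (exponential_density (r x y))"
    and indep_tau: "prob_space.indep_vars M (\<lambda>_. borel) (\<lambda>(x, y, k). tau x y k)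
        {(x, y, k). x \<noteq> y \<and> 0 < r x y}"
    and iota_meas: "iota \<in> measurable M (count_space UNIV)"
    and iota_unif: "\<And>v. measure M {\<omega> \<in> space M. iota \<omega> = v} = 1 / real CARD('a)"
    and iota_indep: "prob_space.indep_set M
        (sigma_sets (space M) {iota -` {v} \<inter> space M | v. True})
        (sigma_sets (space M) {tau x y k -` B \<inter> space M | x y k B.
            x \<noteq> y \<and> 0 < r x y \<and> B \<in> sets borel})"
    and "0 \<le> t"
  shows "(\<integral>\<omega>. real (card {graphical_path (ring_sets r (\<lambda>x y k. tau x y k \<omega>)) x t | x. True}) \<partial>M)
           / real CARD('a)
       = (\<integral>\<omega>. 1 / real (card {i. coal_time (graphical_path (ring_sets r (\<lambda>x y k. tau x y k \<omega>)) i)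
                                       (graphical_path (ring_sets r (\<lambda>x y k. tau x y k \<omega>)) (iota \<omega>))
                                 \<le> ereal t}) \<partial>M)"
proof -
  interpret graphical_representation M r tau
    using \<open>prob_space M\<close> exp_interarrival indep_tau
    by (simp add: graphical_representation_def graphical_representation_axioms_def)
  have "(\<integral>\<omega>. 1 / real (card {i. coal_time (graphical_path (rings \<omega>) i)
      (graphical_path (rings \<omega>) (iota \<omega>)) \<le> ereal t}) \<partial>M)
    = (\<integral>\<omega>. 1 / real (card {i. positions t \<omega> i = positions t \<omega> (iota \<omega>)}) \<partial>M)"
    by (rule integral_coalesced_eq_integral_fibre[OF \<open>0 \<le> t\<close> iota_meas])
  also have "\<dots> = (\<integral>\<omega>. real (card (range (positions t \<omega>))) \<partial>M) / CARD('a)"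
    using iota_unif iota_indep[folded sets_interarrival_sigma]
    by (intro expectation_inverse_card_fibre measurable_positions iota_meas prob_positions_and_index) auto
  finally show ?thesis by (simp add: positions_def full_SetCompr_eq)
qed

end
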